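(* For every $n\ge1$, $$\mathrm{QEC}(K_1+P_{2n})=-4\sin^2\frac{\pi}{2(2n+1)},\qquad -4\sin^2\frac{\pi}{2(2n+2)}<\mathrm{QEC}(K_1+P_{2n+1})<-4\sin^2\frac{\pi}{2(2n+3)}.$$ Moreover, $-\tfrac12=\mathrm{QEC}(K_1+P_3)<\mathrm{QEC}(K_1+P_4)<\mathrm{QEC}(K_1+P_5)<\cdots$ and $\mathrm{QEC}(K_1+P_n)\to0$ as $n\to\infty$.
   Context: For a finite connected graph $G=(V,E)$ with $|V|\ge2$, let $d(i,j)$ be the graph distance and $D=[d(i,j)]_{i,j\in V}$ the distance matrix. The quadratic embedding constant is $\mathrm{QEC}(G)=\max\{\langle f,Df\rangle : f\in\mathbb{R}^V,\ \langle f,f\rangle=1,\ \langle\mathbf 1,f\rangle=0\}$, where $\mathbf 1$ is the all-ones vector. The fan graph $K_1+P_n$ has vertex set $\{0,1,\dots,n\}$ and edges $\{i,i+1\}$ ($1\le i\le n-1$) and $\{0,i\}$ ($1\le i\le n$). *)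

theory Defs
  imports "HOL-Analysis.Analysis"
begin

definition is_walk :: "'a set \<Rightarrow> ('a \<Rightarrow> 'a \<Rightarrow> bool) \<Rightarrow> 'a \<Rightarrow> 'a \<Rightarrow> nat \<Rightarrow> bool" where
  "is_walk V E i j k \<longleftrightarrow> (\<exists>p. length p = Suc k \<and> set p \<subseteq> V \<and> p ! 0 = i \<and> p ! k = j
      \<and> (\<forall>l<k. E (p ! l) (p ! Suc l)))"

definition graph_dist :: "'a set \<Rightarrow> ('a \<Rightarrow> 'a \<Rightarrow> bool) \<Rightarrow> 'a \<Rightarrow> 'a \<Rightarrow> nat" where
  "graph_dist V E i j = (LEAST k. is_walk V E i j k)"

text \<open>Quadratic embedding constant: max of <f, D f> over f with <f,f> = 1, <1,f> = 0
  (written as a supremum; the maximum is attained by compactness).\<close>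
definition QEC :: "'a set \<Rightarrow> ('a \<Rightarrow> 'a \<Rightarrow> bool) \<Rightarrow> real" where
  "QEC V E = Sup {(\<Sum>i\<in>V. \<Sum>j\<in>V. f i * real (graph_dist V E i j) * f j) | f.
      (\<Sum>i\<in>V. (f i)\<^sup>2) = 1 \<and> (\<Sum>i\<in>V. f i) = 0}"

text \<open>Fan graph K_1 + P_n: vertices 0..n, edges {i,i+1} (1 \<le> i \<le> n-1) and {0,i} (1 \<le> i \<le> n).\<close>
definition fan_V :: "nat \<Rightarrow> nat set" where
  "fan_V n = {0..n}"

definition fan_E :: "nat \<Rightarrow> nat \<Rightarrow> nat \<Rightarrow> bool" where
  "fan_E n i j \<longleftrightarrow>
     (1 \<le> i \<and> i \<le> n - 1 \<and> j = i + 1) \<or> (1 \<le> j \<and> j \<le> n - 1 \<and> i = j + 1)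
   \<or> (i = 0 \<and> 1 \<le> j \<and> j \<le> n) \<or> (j = 0 \<and> 1 \<le> i \<and> i \<le> n)"

definition QEC_fan :: "nat \<Rightarrow> real" where
  "QEC_fan n = QEC (fan_V n) (fan_E n)"

end

theory Submission
  imports Defs
begin

text \<open>Put \<open>h\<^sub>i = (-1)\<^sup>i\<^sup>+\<^sup>1 f\<^sub>i\<close> for \<open>i \<ge> 1\<close> and eliminate \<open>f\<^sub>0 = -\<Sum>f\<^sub>i\<close>. Since all distances in the fan
  are 0, 1 or 2, the distance form becomes \<open>-Q(h)\<close>, where \<open>Q\<close> is the quadratic form of \<open>2I - A(P\<^sub>n)\<close>,
  and the constraint becomes \<open>\<Sum>h\<^sub>i\<^sup>2 + (\<Sum>(-1)\<^sup>i\<^sup>+\<^sup>1 h\<^sub>i)\<^sup>2 = 1\<close>.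
  With the positive eigenvector \<open>u\<^sub>i = sin (i\<pi>/(n+1))\<close> of the path and its eigenvalue
  \<open>\<mu> = 4 sin\<^sup>2 (\<pi>/(2(n+1)))\<close>, the Picone identity writes \<open>Q(h) - \<mu>\<Sum>h\<^sub>i\<^sup>2\<close> as a sum of squares \<open>S(h)\<close>
  of the differences of \<open>h\<^sub>i/u\<^sub>i\<close>. For even \<open>n\<close> the alternating partial sums of \<open>u\<close> end in 0, so
  summation by parts and Cauchy-Schwarz give \<open>\<mu>(\<Sum>(-1)\<^sup>i\<^sup>+\<^sup>1 h\<^sub>i)\<^sup>2 \<le> (n+1) tan\<^sup>2(\<pi>/(2(n+1))) S(h)\<close>;
  the constant is at most 1, hence \<open>Q \<ge> \<mu>\<close> on the constraint set, with equality at \<open>u\<close>.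
  For odd \<open>n\<close>, padding \<open>h\<close> by a zero moves it to the even case \<open>n+1\<close>, where the constant is
  strictly below 1 and \<open>S\<close> controls \<open>\<Sum>h\<^sub>i\<^sup>2\<close> on vectors vanishing at \<open>n+1\<close>; this gives
  \<open>QEC < -\<mu>\<^sub>n\<^sub>+\<^sub>1\<close>, while \<open>u\<close> itself, whose alternating sum no longer vanishes, gives \<open>QEC > -\<mu>\<^sub>n\<close>.\<close>

lemma sum_by_parts:
  fixes c r :: "nat \<Rightarrow> real"
  shows "(\<Sum>i=1..N. c i * r i)
       = (\<Sum>j\<in>{1..<N}. (\<Sum>i=1..j. c i) * (r j - r (Suc j))) + (\<Sum>i=1..N. c i) * r N"
proof (induction N)
  case (Suc N)
  then show ?case
    by (cases "N = 0") (simp_all add: atLeastLessThanSuc algebra_simps)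
qed simp

lemma weighted_Cauchy_Schwarz:
  fixes w b d :: "nat \<Rightarrow> real"
  assumes "\<And>j. j \<in> A \<Longrightarrow> w j > 0"
  shows "(\<Sum>j\<in>A. b j * d j)\<^sup>2 \<le> (\<Sum>j\<in>A. w j * (d j)\<^sup>2) * (\<Sum>j\<in>A. (b j)\<^sup>2 / w j)"
proof -
  have "(\<Sum>j\<in>A. (b j / sqrt (w j)) * (sqrt (w j) * d j))\<^sup>2
      \<le> (\<Sum>j\<in>A. (b j / sqrt (w j))\<^sup>2) * (\<Sum>j\<in>A. (sqrt (w j) * d j)\<^sup>2)"
    by (rule Cauchy_Schwarz_ineq_sum)
  moreover have "(\<Sum>j\<in>A. (b j / sqrt (w j)) * (sqrt (w j) * d j)) = (\<Sum>j\<in>A. b j * d j)"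
    using assms by (intro sum.cong refl) (simp add: less_imp_neq[symmetric])
  moreover have "(\<Sum>j\<in>A. (b j / sqrt (w j))\<^sup>2) = (\<Sum>j\<in>A. (b j)\<^sup>2 / w j)"
    using assms by (intro sum.cong refl) (simp add: power_divide less_imp_le)
  moreover have "(\<Sum>j\<in>A. (sqrt (w j) * d j)\<^sup>2) = (\<Sum>j\<in>A. w j * (d j)\<^sup>2)"
    using assms by (intro sum.cong refl) (simp add: power_mult_distrib less_imp_le)
  ultimately show ?thesis by (simp add: mult.commute)
qed

lemma sum_sq_le_telescoping:
  fixes r :: "nat \<Rightarrow> real"
  assumes "r n = 0"
  shows "(\<Sum>i=1..n. (r i)\<^sup>2) \<le> (real n)\<^sup>2 * (\<Sum>j\<in>{1..<n}. (r j - r (Suc j))\<^sup>2)"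
proof -
  define D where "D = (\<Sum>j\<in>{1..<n}. (r j - r (Suc j))\<^sup>2)"
  have "(r i)\<^sup>2 \<le> real n * D" if i: "i \<in> {1..n}" for i
  proof -
    have "(\<Sum>j\<in>{i..<n}. (- r (Suc j)) - (- r j)) = - r n - (- r i)"
      using i by (intro sum_Suc_diff') auto
    then have "r i = (\<Sum>j\<in>{i..<n}. r j - r (Suc j))" using assms by simp
    then have "(r i)\<^sup>2 \<le> (\<Sum>j\<in>{i..<n}. (r j - r (Suc j))\<^sup>2) * card {i..<n}"
      by (simp only: sum_squared_le_sum_of_squares)
    also have "\<dots> \<le> D * real n"
      unfolding D_def using i by (intro mult_mono sum_mono2 sum_nonneg) auto
    finally show ?thesis by (simp add: mult.commute)
  qed
  then have "(\<Sum>i=1..n. (r i)\<^sup>2) \<le> (\<Sum>i=1..n. real n * D)" by (rule sum_mono)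
  then show ?thesis by (simp add: D_def power2_eq_square)
qed

lemma sin_shift_sq_ratio:
  fixes x y e :: real
  assumes "sin x \<noteq> 0" "sin (x + 2*y) \<noteq> 0" "cos y \<noteq> 0" "e\<^sup>2 = 1"
  shows "(sin y + e * sin (x + y))\<^sup>2 / (sin x * sin (x + 2*y))
       = 1 + tan y * ((cos x + e) / sin x - (cos (x + 2*y) - e) / sin (x + 2*y))"
proof -
  have sq_diff: "(sin (x + y))\<^sup>2 = sin x * sin (x + 2*y) + (sin y)\<^sup>2"
    unfolding sin_add sin_double cos_double
    using sin_cos_squared_add[of x] sin_cos_squared_add[of y] by algebra
  have sum_sin: "sin x + sin (x + 2*y) = 2 * sin (x + y) * cos y"
    unfolding sin_add sin_double cos_double
    using sin_cos_squared_add[of x] sin_cos_squared_add[of y] by algebra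
  have diff_sin: "cos x * sin (x + 2*y) - cos (x + 2*y) * sin x = 2 * sin y * cos y"
    unfolding sin_add cos_add sin_double cos_double
    using sin_cos_squared_add[of x] by algebra
  have "tan y * ((cos x + e) * sin (x + 2*y) - (cos (x + 2*y) - e) * sin x)
      = tan y * (2 * sin y * cos y + e * (2 * sin (x + y) * cos y))"
    unfolding diff_sin[symmetric] sum_sin[symmetric] by (simp add: algebra_simps)
  also have "\<dots> = 2 * (sin y)\<^sup>2 + 2 * e * sin y * sin (x + y)"
    using assms(3) by (simp add: tan_def field_simps power2_eq_square)
  finally have "tan y * ((cos x + e) * sin (x + 2*y) - (cos (x + 2*y) - e) * sin x)
      = 2 * (sin y)\<^sup>2 + 2 * e * sin y * sin (x + y)" .
  moreover have ee: "e * (e * z) = z" for z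
    using assms(4) by (simp add: power2_eq_square mult.assoc[symmetric])
  ultimately show ?thesis
    using assms sq_diff by (simp add: field_simps power2_eq_square) (simp add: ee)
qed

section \<open>Distances in the fan\<close>

lemma is_walk_0_iff: "is_walk V E i j 0 \<longleftrightarrow> i = j \<and> i \<in> V"
proof
  assume "is_walk V E i j 0"
  then obtain p where "length p = 1" "set p \<subseteq> V" "p!0 = i" "p!0 = j"
    unfolding is_walk_def by auto
  then show "i = j \<and> i \<in> V" by (metis nth_mem One_nat_def less_one subsetD)
next
  assume "i = j \<and> i \<in> V"
  then show "is_walk V E i j 0"
    unfolding is_walk_def by (intro exI[of _ "[i]"]) auto
qed

lemma is_walk_1_iff: "i \<in> V \<Longrightarrow> j \<in> V \<Longrightarrow> is_walk V E i j 1 \<longleftrightarrow> E i j"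
  unfolding is_walk_def
  by (rule iffI, force, intro exI[of _ "[i,j]"]) (auto simp: less_Suc_eq)

lemma is_walk_2I: "i \<in> V \<Longrightarrow> x \<in> V \<Longrightarrow> j \<in> V \<Longrightarrow> E i x \<Longrightarrow> E x j \<Longrightarrow> is_walk V E i j 2"
  unfolding is_walk_def
  by (intro exI[of _ "[i,x,j]"]) (auto simp: less_Suc_eq numeral_2_eq_2)

lemma graph_dist_fan:
  assumes "i \<le> n" "j \<le> n"
  shows "graph_dist (fan_V n) (fan_E n) i j = (if i = j then 0 else if fan_E n i j then 1 else 2)"
proof -
  let ?walk = "is_walk (fan_V n) (fan_E n) i j"
  have V: "i \<in> fan_V n" "j \<in> fan_V n" "0 \<in> fan_V n"
    using assms by (auto simp: fan_V_def)
  consider "i = j" | "i \<noteq> j" "fan_E n i j" | "i \<noteq> j" "\<not> fan_E n i j" by blast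
  then show ?thesis
  proof cases
    case 1
    then show ?thesis unfolding graph_dist_def using V by (simp add: is_walk_0_iff)
  next
    case 2
    have "(LEAST k. ?walk k) = 1"
    proof (rule Least_equality)
      show "?walk 1" using 2 V by (subst is_walk_1_iff) auto
      show "1 \<le> k" if "?walk k" for k
        using that 2 by (cases k) (auto simp: is_walk_0_iff)
    qed
    then show ?thesis using 2 unfolding graph_dist_def by simp
  next
    case 3
    then have "i \<noteq> 0" "j \<noteq> 0" using assms by (auto simp: fan_E_def)
    then have "?walk 2" using V assms by (intro is_walk_2I[of _ _ 0]) (auto simp: fan_E_def)
    moreover have "2 \<le> k" if "?walk k" for k
      using that 3 V is_walk_1_iff[of i "fan_V n" j] by (cases k; cases "k - 1") (auto simp: is_walk_0_iff)
    ultimately have "(LEAST k. ?walk k) = 2" by (rule Least_equality)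
    then show ?thesis using 3 unfolding graph_dist_def by simp
  qed
qed

lemma double_sum_superdiagonal:
  fixes F :: "nat \<Rightarrow> nat \<Rightarrow> real"
  shows "(\<Sum>i=0..n. \<Sum>j=0..n. if 1 \<le> i \<and> i \<le> n - 1 \<and> j = i + 1 then F i j else 0)
       = (\<Sum>i\<in>{1..<n}. F i (Suc i))"
proof -
  have "(\<Sum>j=0..n. if 1 \<le> i \<and> i \<le> n - 1 \<and> j = i + 1 then F i j else 0)
      = (if i \<in> {1..<n} then F i (Suc i) else 0)" for i
  proof (cases "i \<in> {1..<n}")
    case True
    then have "(1 \<le> i \<and> i \<le> n - 1 \<and> j = i + 1) \<longleftrightarrow> j = Suc i" for j by auto
    then show ?thesis using True by (simp add: sum.delta')
  qed auto
  then have "(\<Sum>i=0..n. \<Sum>j=0..n. if 1 \<le> i \<and> i \<le> n - 1 \<and> j = i + 1 then F i j else 0)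
      = (\<Sum>i=0..n. if i \<in> {1..<n} then F i (Suc i) else 0)"
    by simp
  also have "\<dots> = sum (\<lambda>i. F i (Suc i)) {i \<in> {0..n}. i \<in> {1..<n}}"
    by (rule sum.inter_filter[symmetric]) simp
  also have "{i \<in> {0..n}. i \<in> {1..<n}} = {1..<n}" by auto
  finally show ?thesis .
qed

lemma double_sum_first_row:
  fixes F :: "nat \<Rightarrow> nat \<Rightarrow> real"
  shows "(\<Sum>i=0..n. \<Sum>j=0..n. if i = 0 \<and> 1 \<le> j then F i j else 0) = (\<Sum>j=1..n. F 0 j)"
proof -
  have "(\<Sum>i=0..n. \<Sum>j=0..n. if i = 0 \<and> 1 \<le> j then F i j else 0)
      = (\<Sum>i=0..n. if i = 0 then (\<Sum>j=0..n. if 1 \<le> j then F 0 j else 0) else 0)"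
    by (rule sum.cong) auto
  also have "\<dots> = (\<Sum>j=0..n. if 1 \<le> j then F 0 j else 0)"
    by (simp add: sum.delta)
  also have "\<dots> = sum (F 0) {j \<in> {0..n}. 1 \<le> j}"
    by (rule sum.inter_filter[symmetric]) simp
  also have "{j \<in> {0..n}. 1 \<le> j} = {1..n}" by auto
  finally show ?thesis .
qed

lemma fan_adjacency_form:
  fixes f :: "nat \<Rightarrow> real"
  shows "(\<Sum>i=0..n. \<Sum>j=0..n. if fan_E n i j then f i * f j else 0)
       = 2 * f 0 * (\<Sum>i=1..n. f i) + 2 * (\<Sum>i\<in>{1..<n}. f i * f (Suc i))"
proof -
  let ?E1 = "\<lambda>i j. if 1 \<le> i \<and> i \<le> n - 1 \<and> j = i + 1 then f i * f j else 0"
  let ?E2 = "\<lambda>i j. if 1 \<le> j \<and> j \<le> n - 1 \<and> i = j + 1 then f j * f i else 0"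
  let ?E3 = "\<lambda>i j. if i = 0 \<and> 1 \<le> j then f i * f j else 0"
  let ?E4 = "\<lambda>i j. if j = 0 \<and> 1 \<le> i then f j * f i else 0"
  have split: "(if fan_E n i j then f i * f j else 0) = ?E1 i j + ?E2 i j + ?E3 i j + ?E4 i j"
    if "i \<le> n" "j \<le> n" for i j
    using that by (auto simp: fan_E_def mult.commute)
  have "(\<Sum>i=0..n. \<Sum>j=0..n. if fan_E n i j then f i * f j else 0)
      = (\<Sum>i=0..n. \<Sum>j=0..n. ?E1 i j + ?E2 i j + ?E3 i j + ?E4 i j)"
    by (intro sum.cong refl split) auto
  also have "\<dots> = (\<Sum>i=0..n. \<Sum>j=0..n. ?E1 i j) + (\<Sum>i=0..n. \<Sum>j=0..n. ?E2 i j)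
        + (\<Sum>i=0..n. \<Sum>j=0..n. ?E3 i j) + (\<Sum>i=0..n. \<Sum>j=0..n. ?E4 i j)"
    by (simp only: sum.distrib)
  also have "(\<Sum>i=0..n. \<Sum>j=0..n. ?E2 i j) = (\<Sum>i=0..n. \<Sum>j=0..n. ?E1 i j)"
    by (rule sum.swap)
  also have "(\<Sum>i=0..n. \<Sum>j=0..n. ?E4 i j) = (\<Sum>i=0..n. \<Sum>j=0..n. ?E3 i j)"
    by (rule sum.swap)
  finally show ?thesis
    by (simp only: double_sum_superdiagonal double_sum_first_row) (simp add: sum_distrib_left mult.assoc)
qed

lemma fan_distance_form:
  fixes f :: "nat \<Rightarrow> real"
  shows "(\<Sum>i\<in>fan_V n. \<Sum>j\<in>fan_V n. f i * real (graph_dist (fan_V n) (fan_E n) i j) * f j)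
       = 2 * (\<Sum>i=0..n. f i)\<^sup>2 - 2 * (\<Sum>i=0..n. (f i)\<^sup>2)
         - 2 * f 0 * (\<Sum>i=1..n. f i) - 2 * (\<Sum>i\<in>{1..<n}. f i * f (Suc i))"
proof -
  have "f i * real (graph_dist (fan_V n) (fan_E n) i j) * f j
      = 2 * (f i * f j) - 2 * (if i = j then f i * f j else 0) - (if fan_E n i j then f i * f j else 0)"
    if "i \<in> {0..n}" "j \<in> {0..n}" for i j
    using that by (simp add: graph_dist_fan fan_E_def)
  then have "(\<Sum>i\<in>fan_V n. \<Sum>j\<in>fan_V n. f i * real (graph_dist (fan_V n) (fan_E n) i j) * f j)
      = (\<Sum>i=0..n. \<Sum>j=0..n. 2 * (f i * f j) - 2 * (if i = j then f i * f j else 0)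
           - (if fan_E n i j then f i * f j else 0))"
    unfolding fan_V_def by (intro sum.cong refl)
  also have "\<dots> = 2 * (\<Sum>i=0..n. \<Sum>j=0..n. f i * f j) - 2 * (\<Sum>i=0..n. \<Sum>j=0..n. if i = j then f i * f j else 0)
        - (\<Sum>i=0..n. \<Sum>j=0..n. if fan_E n i j then f i * f j else 0)"
    by (simp only: sum_subtractf sum_distrib_left)
  finally show ?thesis
    by (simp add: fan_adjacency_form sum_product power2_eq_square sum.delta)
qed

section \<open>Reduction to a quadratic form on the path\<close>

definition alt_sign :: "nat \<Rightarrow> real" where
  "alt_sign i = (-1) ^ Suc i"

text \<open>\<open>path_form N h\<close> is \<open>\<langle>h, (2I - A) h\<rangle>\<close> for the adjacency matrix \<open>A\<close> of the path \<open>1 - 2 - \<dots> - N\<close>;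
  \<open>fan_norm N h\<close> is \<open>\<Sum>f\<^sub>i\<^sup>2\<close> after the substitution (lemma \<open>fan_distance_form_alt\<close>).\<close>

definition path_form :: "nat \<Rightarrow> (nat \<Rightarrow> real) \<Rightarrow> real" where
  "path_form N h = 2 * (\<Sum>i=1..N. (h i)\<^sup>2) - 2 * (\<Sum>i\<in>{1..<N}. h i * h (Suc i))"

definition fan_norm :: "nat \<Rightarrow> (nat \<Rightarrow> real) \<Rightarrow> real" where
  "fan_norm N h = (\<Sum>i=1..N. (h i)\<^sup>2) + (\<Sum>i=1..N. alt_sign i * h i)\<^sup>2"

lemma alt_sign_mult_self [simp]: "alt_sign i * alt_sign i = 1"
  by (simp add: alt_sign_def power_mult_distrib[symmetric])

lemma alt_sign_mult_self_left [simp]: "alt_sign i * (alt_sign i * x) = x"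
  by (simp add: mult.assoc[symmetric])

lemma alt_sign_sq [simp]: "(alt_sign i)\<^sup>2 = 1"
  by (simp add: power2_eq_square)

lemma alt_sign_Suc: "alt_sign (Suc i) = - alt_sign i"
  by (simp add: alt_sign_def)

lemma path_form_cong: "(\<And>i. i \<in> {1..N} \<Longrightarrow> h i = g i) \<Longrightarrow> path_form N h = path_form N g"
  unfolding path_form_def by (intro arg_cong2[where f = "(-)"] arg_cong[where f = "(*) 2"] sum.cong) auto

lemma fan_norm_cong: "(\<And>i. i \<in> {1..N} \<Longrightarrow> h i = g i) \<Longrightarrow> fan_norm N h = fan_norm N g"
  unfolding fan_norm_def by (intro arg_cong2[where f = "(+)"] arg_cong[where f = "\<lambda>x. x\<^sup>2"] sum.cong) auto

lemma path_form_scale: "path_form N (\<lambda>i. c * h i) = c\<^sup>2 * path_form N h"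
  unfolding path_form_def by (simp add: power_mult_distrib sum_distrib_left algebra_simps power2_eq_square)

lemma fan_norm_scale: "fan_norm N (\<lambda>i. c * h i) = c\<^sup>2 * fan_norm N h"
  unfolding fan_norm_def
  by (simp add: power_mult_distrib sum_distrib_left[symmetric] mult.left_commute distrib_left)

lemma path_form_nonneg: "path_form N h \<ge> 0"
proof -
  have "{Suc 1..<Suc N} = {2..N}" by auto
  then have shift: "(\<Sum>i\<in>{1..<N}. (h (Suc i))\<^sup>2) = (\<Sum>i=2..N. (h i)\<^sup>2)"
    using sum.shift_bounds_Suc_ivl[of "\<lambda>i. (h i)\<^sup>2" 1 N] by simp
  have "2 * (\<Sum>i\<in>{1..<N}. h i * h (Suc i)) \<le> (\<Sum>i\<in>{1..<N}. (h i)\<^sup>2 + (h (Suc i))\<^sup>2)"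
    unfolding sum_distrib_left by (rule sum_mono) (metis mult.assoc sum_squares_bound)
  also have "\<dots> = (\<Sum>i\<in>{1..<N}. (h i)\<^sup>2) + (\<Sum>i=2..N. (h i)\<^sup>2)"
    by (simp only: sum.distrib shift)
  also have "\<dots> \<le> 2 * (\<Sum>i=1..N. (h i)\<^sup>2)"
    using sum_mono2[of "{1..N}" "{1..<N}" "\<lambda>i. (h i)\<^sup>2"] sum_mono2[of "{1..N}" "{2..N}" "\<lambda>i. (h i)\<^sup>2"]
    by force
  finally show ?thesis unfolding path_form_def by simp
qed

lemma fan_distance_form_alt:
  fixes f :: "nat \<Rightarrow> real"
  assumes "(\<Sum>i=0..n. f i) = 0"
  shows "(\<Sum>i\<in>fan_V n. \<Sum>j\<in>fan_V n. f i * real (graph_dist (fan_V n) (fan_E n) i j) * f j)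
         = - path_form n (\<lambda>i. alt_sign i * f i)"
    and "(\<Sum>i=0..n. (f i)\<^sup>2) = fan_norm n (\<lambda>i. alt_sign i * f i)"
proof -
  have f0: "f 0 = - (\<Sum>i=1..n. f i)"
    using assms by (simp add: sum.atLeast_Suc_atMost)
  have "alt_sign i * f i * (alt_sign (Suc i) * f (Suc i)) = - (f i * f (Suc i))" for i
    by (simp add: alt_sign_Suc algebra_simps)
  then show "(\<Sum>i\<in>fan_V n. \<Sum>j\<in>fan_V n. f i * real (graph_dist (fan_V n) (fan_E n) i j) * f j)
         = - path_form n (\<lambda>i. alt_sign i * f i)"
    unfolding fan_distance_form path_form_def assms
    by (simp add: sum.atLeast_Suc_atMost f0 power_mult_distrib sum_negf power2_eq_square algebra_simps)
  show "(\<Sum>i=0..n. (f i)\<^sup>2) = fan_norm n (\<lambda>i. alt_sign i * f i)"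
    unfolding fan_norm_def by (simp add: sum.atLeast_Suc_atMost f0 power_mult_distrib mult.assoc[symmetric])
qed

lemma QEC_fan_eq_Sup: "QEC_fan n = Sup {- path_form n h | h. fan_norm n h = 1}"
proof -
  have "{\<Sum>i\<in>fan_V n. \<Sum>j\<in>fan_V n. f i * real (graph_dist (fan_V n) (fan_E n) i j) * f j | f.
          (\<Sum>i\<in>fan_V n. (f i)\<^sup>2) = 1 \<and> (\<Sum>i\<in>fan_V n. f i) = 0}
      = {- path_form n h | h. fan_norm n h = 1}" (is "?L = ?R")
  proof
    show "?L \<subseteq> ?R"
      using fan_distance_form_alt unfolding fan_V_def by fastforce
    show "?R \<subseteq> ?L"
    proof
      fix x assume "x \<in> ?R"
      then obtain h where h: "fan_norm n h = 1" "x = - path_form n h" by blast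
      define f where "f i = (if i = 0 then - (\<Sum>j=1..n. alt_sign j * h j) else alt_sign i * h i)" for i
      have alt_f: "alt_sign i * f i = h i" if "i \<in> {1..n}" for i
        using that by (simp add: f_def mult.assoc[symmetric])
      have sum_f: "(\<Sum>i=0..n. f i) = 0"
        by (simp add: sum.atLeast_Suc_atMost f_def)
      have "path_form n (\<lambda>i. alt_sign i * f i) = path_form n h"
        by (rule path_form_cong) (rule alt_f)
      moreover have "fan_norm n (\<lambda>i. alt_sign i * f i) = fan_norm n h"
        by (rule fan_norm_cong) (rule alt_f)
      ultimately show "x \<in> ?L"
        using fan_distance_form_alt[OF sum_f] h sum_f unfolding fan_V_def
        by (intro CollectI exI[of _ f]) auto
    qed
  qed
  then show ?thesis unfolding QEC_fan_def QEC_def by simp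
qed

lemma fan_norm_normalize:
  assumes "fan_norm n h > 0"
  defines "g \<equiv> \<lambda>i. h i / sqrt (fan_norm n h)"
  shows "fan_norm n g = 1" and "path_form n g = path_form n h / fan_norm n h"
proof -
  have g: "g = (\<lambda>i. (1 / sqrt (fan_norm n h)) * h i)" by (simp add: g_def)
  show "fan_norm n g = 1" "path_form n g = path_form n h / fan_norm n h"
    unfolding g fan_norm_scale path_form_scale using assms by (simp_all add: power_divide)
qed

lemma QEC_fan_ge:
  assumes "fan_norm n h > 0"
  shows "- path_form n h / fan_norm n h \<le> QEC_fan n"
proof -
  have "bdd_above {- path_form n h | h. fan_norm n h = 1}"
    by (rule bdd_aboveI[of _ 0]) (use path_form_nonneg in auto)
  moreover have "- path_form n h / fan_norm n h \<in> {- path_form n h | h. fan_norm n h = 1}"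
    using fan_norm_normalize[OF assms] by force
  ultimately show ?thesis unfolding QEC_fan_eq_Sup by (rule cSup_upper[rotated])
qed

lemma QEC_fan_le:
  assumes "n \<ge> 1" and "\<And>h. c * fan_norm n h \<le> path_form n h"
  shows "QEC_fan n \<le> - c"
proof -
  define e :: "nat \<Rightarrow> real" where "e i = (if i = 1 then 1 else 0)" for i
  have e_sq: "(\<lambda>i. (e i)\<^sup>2) = e" and e_alt: "(\<lambda>i. alt_sign i * e i) = e"
    by (auto simp: e_def alt_sign_def)
  have "fan_norm n e = 2"
    using assms(1) unfolding fan_norm_def by (simp only: e_sq e_alt) (simp add: e_def)
  then have "{- path_form n h | h. fan_norm n h = 1} \<noteq> {}"
    using fan_norm_normalize(1)[of n e] by auto
  then show ?thesis
    unfolding QEC_fan_eq_Sup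
  proof (rule cSup_least)
    fix x assume "x \<in> {- path_form n h | h. fan_norm n h = 1}"
    then obtain h where "fan_norm n h = 1" "x = - path_form n h" by blast
    then show "x \<le> - c" using assms(2)[of h] by simp
  qed
qed

section \<open>The Picone identity and the eigenvector of the path\<close>

definition picone_sum :: "(nat \<Rightarrow> real) \<Rightarrow> nat \<Rightarrow> (nat \<Rightarrow> real) \<Rightarrow> real" where
  "picone_sum u N h = (\<Sum>j\<in>{1..<N}. u j * u (Suc j) * (h j / u j - h (Suc j) / u (Suc j))\<^sup>2)"

lemma path_form_picone:
  assumes "N \<ge> 1" and "u 0 = 0" and "\<And>i. i \<in> {1..N} \<Longrightarrow> u i \<noteq> 0"
    and "\<And>i. i \<in> {1..N} \<Longrightarrow> u (i - 1) + u (Suc i) = (2 - \<mu>) * u i"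
  shows "path_form N h - \<mu> * (\<Sum>i=1..N. (h i)\<^sup>2) = picone_sum u N h + u (Suc N) / u N * (h N)\<^sup>2"
  using assms(1,3,4)
proof (induction N rule: nat_induct_at_least)
  case base
  have u1: "u 1 \<noteq> 0" using base(1)[of 1] by simp
  have u2: "u (Suc (Suc 0)) = (2 - \<mu>) * u (Suc 0)" using base(2)[of 1] assms(2) by simp
  show ?case using u1 by (simp add: path_form_def picone_sum_def u2 field_simps power2_eq_square)
next
  case (Suc N)
  have IH: "path_form N h - \<mu> * (\<Sum>i=1..N. (h i)\<^sup>2) = picone_sum u N h + u (Suc N) / u N * (h N)\<^sup>2"
    by (rule Suc.IH) (use Suc.prems in auto)
  have u: "u N \<noteq> 0" "u (Suc N) \<noteq> 0" using Suc.prems(1) Suc.hyps by auto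
  have "u N + u (Suc (Suc N)) = (2 - \<mu>) * u (Suc N)"
    using Suc.prems(2)[of "Suc N"] by simp
  then have "u N / u (Suc N) + u (Suc (Suc N)) / u (Suc N) = 2 - \<mu>"
    using u by (simp add: field_simps)
  then have rec: "u N / u (Suc N) * (h (Suc N))\<^sup>2 + u (Suc (Suc N)) / u (Suc N) * (h (Suc N))\<^sup>2
      = (2 - \<mu>) * (h (Suc N))\<^sup>2"
    by (simp only: distrib_right[symmetric])
  have sq: "(\<Sum>i=1..Suc N. (h i)\<^sup>2) = (\<Sum>i=1..N. (h i)\<^sup>2) + (h (Suc N))\<^sup>2"
    by simp
  have "path_form (Suc N) h = path_form N h + 2 * (h (Suc N))\<^sup>2 - 2 * h N * h (Suc N)"
    using Suc.hyps by (simp add: path_form_def)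
  moreover have "picone_sum u (Suc N) h = picone_sum u N h
      + u (Suc N) / u N * (h N)\<^sup>2 - 2 * h N * h (Suc N) + u N / u (Suc N) * (h (Suc N))\<^sup>2"
    using Suc.hyps u by (simp add: picone_sum_def field_simps power2_eq_square)
  ultimately show ?case
    using IH rec unfolding sq by (simp add: algebra_simps)
qed

lemma picone_sum_nonneg:
  assumes "\<And>i. i \<in> {1..N} \<Longrightarrow> u i > 0"
  shows "picone_sum u N h \<ge> 0"
  unfolding picone_sum_def
proof (rule sum_nonneg)
  fix j assume "j \<in> {1..<N}"
  then have "u j > 0" "u (Suc j) > 0" using assms by auto
  then show "u j * u (Suc j) * (h j / u j - h (Suc j) / u (Suc j))\<^sup>2 \<ge> 0" by simp
qed

lemma picone_sum_self: "picone_sum u N u = 0"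
  unfolding picone_sum_def by (rule sum.neutral) (simp add: divide_self_if)

definition path_angle :: "nat \<Rightarrow> real" where
  "path_angle N = pi / (real N + 1)"

definition path_eigvec :: "nat \<Rightarrow> nat \<Rightarrow> real" where
  "path_eigvec N i = sin (real i * path_angle N)"

definition path_eigval :: "nat \<Rightarrow> real" where
  "path_eigval N = 2 - 2 * cos (path_angle N)"

lemma path_angle_pos: "path_angle N > 0"
  by (simp add: path_angle_def)

lemma path_angle_le: "N \<ge> 1 \<Longrightarrow> path_angle N \<le> pi / 2"
  by (simp add: path_angle_def field_simps)

lemma path_angle_half_trig:
  assumes "N \<ge> 1"
  shows "sin (path_angle N) > 0" "sin (path_angle N / 2) > 0" "cos (path_angle N / 2) > 0"
  using path_angle_le[OF assms] path_angle_pos[of N] by (auto intro!: sin_gt_zero cos_gt_zero)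

lemma path_eigvec_pos:
  assumes "i \<in> {1..N}"
  shows "path_eigvec N i > 0"
proof -
  have "real i * pi < (real N + 1) * pi" using assms by simp
  then have "real i * path_angle N < pi" by (simp add: path_angle_def field_simps)
  then show ?thesis
    using assms path_angle_pos[of N] unfolding path_eigvec_def by (intro sin_gt_zero) auto
qed

lemma path_eigvec_0 [simp]: "path_eigvec N 0 = 0"
  by (simp add: path_eigvec_def)

lemma path_eigvec_Suc_self: "path_eigvec N (Suc N) = 0"
  by (simp add: path_eigvec_def path_angle_def add.commute)

lemma path_eigvec_rec:
  assumes "i \<ge> 1"
  shows "path_eigvec N (i - 1) + path_eigvec N (Suc i) = (2 - path_eigval N) * path_eigvec N i"
proof -
  have "real (i - 1) * path_angle N = real i * path_angle N - path_angle N"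
    using assms by (simp add: of_nat_diff algebra_simps)
  moreover have "real (Suc i) * path_angle N = real i * path_angle N + path_angle N"
    by (simp add: algebra_simps)
  ultimately show ?thesis
    unfolding path_eigvec_def path_eigval_def by (simp only: sin_add sin_diff) (simp add: algebra_simps)
qed

lemma path_eigval_eq: "path_eigval N = 4 * (sin (path_angle N / 2))\<^sup>2"
  using cos_double_sin[of "path_angle N / 2"] by (simp add: path_eigval_def)

lemma path_eigval_pos: "N \<ge> 1 \<Longrightarrow> path_eigval N > 0"
  unfolding path_eigval_eq using path_angle_half_trig(2)[of N] by simp

lemma path_form_eigval_picone:
  assumes "N \<ge> 1"
  shows "path_form N h - path_eigval N * (\<Sum>i=1..N. (h i)\<^sup>2) = picone_sum (path_eigvec N) N h"
proof -
  have "path_eigvec N i \<noteq> 0" if "i \<in> {1..N}" for i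
    using path_eigvec_pos[OF that] by simp
  moreover have "path_eigvec N (i - 1) + path_eigvec N (Suc i) = (2 - path_eigval N) * path_eigvec N i"
    if "i \<in> {1..N}" for i
    using that by (intro path_eigvec_rec) simp
  ultimately show ?thesis
    using path_form_picone[OF assms, of "path_eigvec N"] by (simp add: path_eigvec_Suc_self)
qed

lemma path_eigvec_sumsq_pos: "N \<ge> 1 \<Longrightarrow> (\<Sum>i=1..N. (path_eigvec N i)\<^sup>2) > 0"
proof (rule sum_pos)
  show "(path_eigvec N i)\<^sup>2 > 0" if "i \<in> {1..N}" for i
    using path_eigvec_pos[OF that] by simp
qed auto

section \<open>Alternating partial sums of the eigenvector\<close>

definition alt_eigvec_sum :: "nat \<Rightarrow> nat \<Rightarrow> real" where
  "alt_eigvec_sum N j = (\<Sum>i=1..j. alt_sign i * path_eigvec N i)"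

lemma alt_eigvec_sum_closed:
  "2 * cos (path_angle N / 2) * alt_eigvec_sum N j
     = sin (path_angle N / 2) + alt_sign j * sin ((real j + 1/2) * path_angle N)"
proof (induction j)
  case 0
  then show ?case by (simp add: alt_eigvec_sum_def alt_sign_def)
next
  case (Suc j)
  define t where "t = path_angle N"
  have "(real (Suc j) + 1/2) * t = real (Suc j) * t + t/2"
    and "(real j + 1/2) * t = real (Suc j) * t - t/2"
    by (simp_all add: algebra_simps)
  then have sum_to_product: "2 * cos (t/2) * sin (real (Suc j) * t)
      = sin ((real (Suc j) + 1/2) * t) + sin ((real j + 1/2) * t)"
    by (simp only: sin_add sin_diff) (simp add: algebra_simps)
  have "2 * cos (t/2) * alt_eigvec_sum N (Suc j)
      = 2 * cos (t/2) * alt_eigvec_sum N j + alt_sign (Suc j) * (2 * cos (t/2) * sin (real (Suc j) * t))"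
    by (simp add: alt_eigvec_sum_def path_eigvec_def t_def algebra_simps)
  also have "\<dots> = sin (t/2) + alt_sign (Suc j) * sin ((real (Suc j) + 1/2) * t)"
    unfolding sum_to_product using Suc.IH by (simp add: t_def alt_sign_Suc algebra_simps)
  finally show ?case by (simp add: t_def)
qed

lemma path_angle_last: "(real N + 1/2) * path_angle N = pi - path_angle N / 2"
  by (simp add: path_angle_def field_simps)

lemma alt_eigvec_sum_even:
  assumes "N \<ge> 1" "even N"
  shows "alt_eigvec_sum N N = 0"
proof -
  have "2 * cos (path_angle N / 2) * alt_eigvec_sum N N = 0"
    using alt_eigvec_sum_closed[of N N] assms(2) by (simp add: alt_sign_def path_angle_last)
  then show ?thesis using path_angle_half_trig(3)[OF assms(1)] by simp
qed

lemma alt_eigvec_sum_odd: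
  assumes "N \<ge> 1" "odd N"
  shows "alt_eigvec_sum N N = tan (path_angle N / 2)"
proof -
  have "2 * cos (path_angle N / 2) * alt_eigvec_sum N N = 2 * sin (path_angle N / 2)"
    using alt_eigvec_sum_closed[of N N] assms(2) by (simp add: alt_sign_def path_angle_last)
  then show ?thesis using path_angle_half_trig(3)[OF assms(1)] by (simp add: tan_def field_simps)
qed

text \<open>The summands of \<open>\<Sum>\<^sub>j B\<^sub>j\<^sup>2/(u\<^sub>j u\<^sub>j\<^sub>+\<^sub>1)\<close> telescope along \<open>eigvec_cot\<close>.\<close>

definition eigvec_cot :: "nat \<Rightarrow> nat \<Rightarrow> real" where
  "eigvec_cot N j = (cos (real j * path_angle N) + alt_sign j) / sin (real j * path_angle N)"

lemma alt_eigvec_sum_sq_ratio_telescoping: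
  assumes "j \<in> {1..<N}"
  shows "(2 * cos (path_angle N / 2) * alt_eigvec_sum N j)\<^sup>2 / (path_eigvec N j * path_eigvec N (Suc j))
       = 1 + tan (path_angle N / 2) * (eigvec_cot N j - eigvec_cot N (Suc j))"
proof -
  define t where "t = path_angle N"
  have shift: "real j * t + 2 * (t/2) = real (Suc j) * t" "real j * t + t/2 = (real j + 1/2) * t"
    by (simp_all add: algebra_simps)
  have "sin (real j * t) \<noteq> 0" "sin (real j * t + 2 * (t/2)) \<noteq> 0"
    using path_eigvec_pos[of j N] path_eigvec_pos[of "Suc j" N] assms
    unfolding shift by (auto simp: path_eigvec_def t_def)
  moreover have "cos (t/2) \<noteq> 0"
    using path_angle_half_trig(3)[of N] assms by (simp add: t_def)
  ultimately show ?thesis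
    using sin_shift_sq_ratio[of "real j * t" "t/2" "alt_sign j"]
    unfolding shift alt_eigvec_sum_closed
    by (simp add: t_def eigvec_cot_def path_eigvec_def alt_sign_Suc)
qed

lemma tan_mult_eigvec_cot_diff:
  assumes "N \<ge> 1" "even N"
  shows "tan (path_angle N / 2) * (eigvec_cot N 1 - eigvec_cot N N) = 2"
proof -
  define t where "t = path_angle N"
  have c: "cos (t/2) > 0" "sin (t/2) > 0"
    using path_angle_half_trig[OF assms(1)] by (simp_all add: t_def)
  have "real N * t = pi - t" by (simp add: t_def path_angle_def field_simps)
  then have "eigvec_cot N 1 - eigvec_cot N N = 2 * (1 + cos t) / sin t"
    using assms(2) unfolding t_def
    by (simp add: eigvec_cot_def alt_sign_def diff_divide_distrib[symmetric] add_divide_distrib[symmetric])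
  also have "\<dots> = 2 / tan (t/2)"
    using cos_double_cos[of "t/2"] sin_double[of "t/2"] c by (simp add: tan_def field_simps power2_eq_square)
  finally show ?thesis using c by (simp add: t_def tan_def)
qed

lemma sum_alt_eigvec_sum_sq_ratio:
  assumes "N \<ge> 2" "even N"
  shows "(\<Sum>j\<in>{1..<N}. (alt_eigvec_sum N j)\<^sup>2 / (path_eigvec N j * path_eigvec N (Suc j)))
       = (real N + 1) / (4 * (cos (path_angle N / 2))\<^sup>2)"
proof -
  define c where "c = cos (path_angle N / 2)"
  have N1: "N \<ge> 1" using assms(1) by simp
  have "(\<Sum>j\<in>{1..<N}. eigvec_cot N (Suc j) - eigvec_cot N j) = eigvec_cot N N - eigvec_cot N 1"
    using N1 by (rule sum_Suc_diff')
  then have "(\<Sum>j\<in>{1..<N}. eigvec_cot N j - eigvec_cot N (Suc j)) = eigvec_cot N 1 - eigvec_cot N N"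
    by (simp add: sum_subtractf)
  then have "tan (path_angle N / 2) * (\<Sum>j\<in>{1..<N}. eigvec_cot N j - eigvec_cot N (Suc j)) = 2"
    using tan_mult_eigvec_cot_diff[OF N1 assms(2)] by simp
  then have "(\<Sum>j\<in>{1..<N}. (2 * c * alt_eigvec_sum N j)\<^sup>2 / (path_eigvec N j * path_eigvec N (Suc j)))
      = real N + 1"
    using N1 by (simp add: c_def alt_eigvec_sum_sq_ratio_telescoping sum.distrib
        sum_distrib_left[symmetric] of_nat_diff)
  moreover have "c > 0" using path_angle_half_trig(3)[OF N1] by (simp add: c_def)
  then have "(\<Sum>j\<in>{1..<N}. (alt_eigvec_sum N j)\<^sup>2 / (path_eigvec N j * path_eigvec N (Suc j)))
      = (\<Sum>j\<in>{1..<N}. (2 * c * alt_eigvec_sum N j)\<^sup>2 / (path_eigvec N j * path_eigvec N (Suc j)))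
        / (4 * c\<^sup>2)"
    unfolding sum_divide_distrib by (intro sum.cong refl) (simp add: power_mult_distrib field_simps)
  ultimately show ?thesis by (simp add: c_def)
qed

section \<open>Even fans\<close>

lemma alt_sum_sq_le_picone_sum:
  assumes "N \<ge> 2" "even N"
  shows "(\<Sum>i=1..N. alt_sign i * h i)\<^sup>2
       \<le> picone_sum (path_eigvec N) N h * ((real N + 1) / (4 * (cos (path_angle N / 2))\<^sup>2))"
proof -
  define r where "r i = h i / path_eigvec N i" for i
  have "(\<Sum>i=1..N. alt_sign i * h i) = (\<Sum>i=1..N. (alt_sign i * path_eigvec N i) * r i)"
    using path_eigvec_pos[of _ N] by (intro sum.cong refl) (simp add: r_def less_imp_neq[symmetric])
  also have "\<dots> = (\<Sum>j\<in>{1..<N}. alt_eigvec_sum N j * (r j - r (Suc j))) + alt_eigvec_sum N N * r N"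
    unfolding alt_eigvec_sum_def by (rule sum_by_parts)
  also have "\<dots> = (\<Sum>j\<in>{1..<N}. alt_eigvec_sum N j * (r j - r (Suc j)))"
    using assms by (simp add: alt_eigvec_sum_even)
  finally have by_parts: "(\<Sum>i=1..N. alt_sign i * h i) = \<dots>" .
  have "(\<Sum>j\<in>{1..<N}. alt_eigvec_sum N j * (r j - r (Suc j)))\<^sup>2
      \<le> (\<Sum>j\<in>{1..<N}. path_eigvec N j * path_eigvec N (Suc j) * (r j - r (Suc j))\<^sup>2)
        * (\<Sum>j\<in>{1..<N}. (alt_eigvec_sum N j)\<^sup>2 / (path_eigvec N j * path_eigvec N (Suc j)))"
    by (rule weighted_Cauchy_Schwarz) (simp add: path_eigvec_pos)
  then show ?thesis
    unfolding by_parts sum_alt_eigvec_sum_sq_ratio[OF assms] by (simp add: picone_sum_def r_def)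
qed

text \<open>\<open>tan_ratio N\<close> is \<open>path_eigval N\<close> times the Cauchy-Schwarz constant of \<open>alt_sum_sq_le_picone_sum\<close>.\<close>

definition tan_ratio :: "nat \<Rightarrow> real" where
  "tan_ratio N = (real N + 1) * (tan (path_angle N / 2))\<^sup>2"

lemma path_form_ge_eigval_fan_norm:
  assumes "N \<ge> 2" "even N"
  shows "path_form N h - path_eigval N * fan_norm N h \<ge> (1 - tan_ratio N) * picone_sum (path_eigvec N) N h"
proof -
  define W where "W = (real N + 1) / (4 * (cos (path_angle N / 2))\<^sup>2)"
  have weight: "path_eigval N * W = tan_ratio N"
    using path_angle_half_trig(3)[of N] assms(1)
    by (simp add: W_def path_eigval_eq tan_ratio_def tan_def power_divide)
  have "path_eigval N * (\<Sum>i=1..N. alt_sign i * h i)\<^sup>2 \<le> path_eigval N * (picone_sum (path_eigvec N) N h * W)"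
    using alt_sum_sq_le_picone_sum[OF assms, of h] path_eigval_pos[of N] assms(1)
    unfolding W_def by (intro mult_left_mono) auto
  also have "\<dots> = tan_ratio N * picone_sum (path_eigvec N) N h"
    unfolding weight[symmetric] by (simp only: ac_simps)
  finally have "path_eigval N * (\<Sum>i=1..N. alt_sign i * h i)\<^sup>2 \<le> tan_ratio N * picone_sum (path_eigvec N) N h" .
  moreover have "path_form N h - path_eigval N * (\<Sum>i=1..N. (h i)\<^sup>2) = picone_sum (path_eigvec N) N h"
    using assms(1) by (intro path_form_eigval_picone) simp
  ultimately show ?thesis by (simp add: fan_norm_def algebra_simps)
qed

lemma tan_ratio_2: "tan_ratio 2 = 1"
proof -
  have angle: "path_angle 2 / 2 = pi / 6" by (simp add: path_angle_def)
  show ?thesis unfolding tan_ratio_def tan_def angle sin_30 cos_30 by (simp add: power_divide)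
qed

lemma tan_ratio_less_1:
  assumes "N \<ge> 4"
  shows "tan_ratio N < 1"
proof -
  define y where "y = path_angle N / 2"
  have y: "y > 0" "y < 2/5"
    using assms pi_less_4 path_angle_pos[of N]
    by (auto simp: y_def path_angle_def field_simps)
  have N_y: "real N + 1 = pi / (2 * y)" by (simp add: y_def path_angle_def)
  have "(sin (y/2))\<^sup>2 \<le> (y/2)\<^sup>2"
    using abs_sin_x_le_abs_x[of "y/2"] by (simp only: abs_le_square_iff)
  then have "1 - y\<^sup>2/2 \<le> cos y"
    using cos_double_sin[of "y/2"] by (simp add: power_divide)
  moreover have "y\<^sup>2 < (2/5)\<^sup>2" using y by (intro power_strict_mono) auto
  ultimately have cos_y: "23/25 \<le> cos y" by (simp add: power_divide)
  have "(real N + 1) * (sin y)\<^sup>2 \<le> (real N + 1) * y\<^sup>2"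
    using y sin_x_le_x[of y] sin_gt_zero[of y] pi_gt3 by (intro mult_left_mono power_mono) auto
  also have "\<dots> = pi * y / 2" unfolding N_y using y by (simp add: power2_eq_square field_simps)
  also have "\<dots> < (23/25)\<^sup>2"
    using mult_strict_mono[OF pi_less_4 y(2)] y by (simp add: power2_eq_square)
  also have "\<dots> \<le> (cos y)\<^sup>2" using cos_y by (intro power_mono) auto
  finally have "(real N + 1) * (sin y)\<^sup>2 < (cos y)\<^sup>2" .
  with cos_y show ?thesis
    by (simp add: tan_ratio_def y_def[symmetric] tan_def power_divide field_simps)
qed

lemma tan_ratio_le_1:
  assumes "N \<ge> 2" "even N"
  shows "tan_ratio N \<le> 1"
proof -
  have "N = 2 \<or> N \<ge> 4" using assms by presburger
  then show ?thesis using tan_ratio_less_1[of N] tan_ratio_2 by auto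
qed

lemma QEC_fan_even:
  assumes "N \<ge> 2" "even N"
  shows "QEC_fan N = - path_eigval N"
proof (rule antisym)
  have N1: "N \<ge> 1" using assms(1) by simp
  have "path_eigval N * fan_norm N h \<le> path_form N h" for h
  proof -
    have "picone_sum (path_eigvec N) N h \<ge> 0"
      by (rule picone_sum_nonneg) (rule path_eigvec_pos)
    then have "(1 - tan_ratio N) * picone_sum (path_eigvec N) N h \<ge> 0"
      using tan_ratio_le_1[OF assms] by simp
    then show ?thesis using path_form_ge_eigval_fan_norm[OF assms, of h] by simp
  qed
  then show "QEC_fan N \<le> - path_eigval N" by (rule QEC_fan_le[OF N1])
  \<comment> \<open>the eigenvector attains the bound, as its alternating sum vanishes\<close>
  have "fan_norm N (path_eigvec N) = (\<Sum>i=1..N. (path_eigvec N i)\<^sup>2)"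
    using alt_eigvec_sum_even[OF N1 assms(2)] by (simp add: fan_norm_def alt_eigvec_sum_def)
  moreover have "path_form N (path_eigvec N) = path_eigval N * (\<Sum>i=1..N. (path_eigvec N i)\<^sup>2)"
    using path_form_eigval_picone[OF N1, of "path_eigvec N"] by (simp add: picone_sum_self)
  ultimately show "- path_eigval N \<le> QEC_fan N"
    using QEC_fan_ge[of N "path_eigvec N"] path_eigvec_sumsq_pos[OF N1] by simp
qed

section \<open>Odd fans\<close>

lemma picone_sum_coercive:
  assumes "n \<ge> 2"
  obtains K where "K \<ge> 0"
    and "\<And>h. h n = 0 \<Longrightarrow> (\<Sum>i=1..n. (h i)\<^sup>2) \<le> K * picone_sum (path_eigvec n) n h"
proof
  define w where "w j = path_eigvec n j * path_eigvec n (Suc j)" for j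
  define c where "c = Min (w ` {1..<n})"
  have "c \<in> w ` {1..<n}"
    unfolding c_def using assms by (intro Min_in) auto
  then have c: "c > 0" using path_eigvec_pos by (auto simp: w_def)
  show "(real n)\<^sup>2 / c \<ge> 0" using c by simp
  fix h :: "nat \<Rightarrow> real" assume "h n = 0"
  define r where "r i = h i / path_eigvec n i" for i
  have "(h i)\<^sup>2 \<le> (r i)\<^sup>2" if "i \<in> {1..n}" for i
  proof -
    have "(path_eigvec n i)\<^sup>2 \<le> 1" by (simp add: path_eigvec_def abs_square_le_1)
    then have "(h i)\<^sup>2 * (path_eigvec n i)\<^sup>2 \<le> (h i)\<^sup>2" by (rule mult_left_le) simp
    then show ?thesis
      using path_eigvec_pos[OF that] by (simp add: r_def power_divide le_divide_eq)
  qed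
  then have "(\<Sum>i=1..n. (h i)\<^sup>2) \<le> (\<Sum>i=1..n. (r i)\<^sup>2)" by (rule sum_mono)
  also have "\<dots> \<le> (real n)\<^sup>2 * (\<Sum>j\<in>{1..<n}. (r j - r (Suc j))\<^sup>2)"
    using \<open>h n = 0\<close> by (intro sum_sq_le_telescoping) (simp add: r_def)
  also have "\<dots> \<le> (real n)\<^sup>2 / c * (\<Sum>j\<in>{1..<n}. w j * (r j - r (Suc j))\<^sup>2)"
  proof -
    have "c * (\<Sum>j\<in>{1..<n}. (r j - r (Suc j))\<^sup>2) \<le> (\<Sum>j\<in>{1..<n}. w j * (r j - r (Suc j))\<^sup>2)"
      unfolding sum_distrib_left c_def by (intro sum_mono mult_right_mono Min_le) auto
    then have "(real n)\<^sup>2 / c * (c * (\<Sum>j\<in>{1..<n}. (r j - r (Suc j))\<^sup>2))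
        \<le> (real n)\<^sup>2 / c * (\<Sum>j\<in>{1..<n}. w j * (r j - r (Suc j))\<^sup>2)"
      using c by (intro mult_left_mono) auto
    then show ?thesis using c by simp
  qed
  also have "\<dots> = (real n)\<^sup>2 / c * picone_sum (path_eigvec n) n h"
    by (simp add: picone_sum_def w_def r_def)
  finally show "(\<Sum>i=1..n. (h i)\<^sup>2) \<le> (real n)\<^sup>2 / c * picone_sum (path_eigvec n) n h" .
qed

lemma path_form_fun_upd_Suc: "path_form (Suc N) (h(Suc N := 0)) = path_form N h"
proof -
  have "(\<Sum>i\<in>{1..<Suc N}. (h(Suc N := 0)) i * (h(Suc N := 0)) (Suc i)) = (\<Sum>i\<in>{1..<N}. h i * h (Suc i))"
    by (cases N) (simp_all add: atLeastLessThanSuc)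
  then show ?thesis by (simp add: path_form_def)
qed

lemma fan_norm_fun_upd_Suc: "fan_norm (Suc N) (h(Suc N := 0)) = fan_norm N h"
  by (simp add: fan_norm_def)

lemma path_form_ge_fan_norm_odd:
  assumes "N \<ge> 3" "odd N"
  obtains \<delta> where "\<delta> > 0" "\<And>h. (path_eigval (Suc N) + \<delta>) * fan_norm N h \<le> path_form N h"
proof -
  define n where "n = Suc N"
  have n: "n \<ge> 4" "even n" using assms by (auto simp: n_def)
  then obtain K where K: "K \<ge> 0"
    "\<And>h. h n = 0 \<Longrightarrow> (\<Sum>i=1..n. (h i)\<^sup>2) \<le> K * picone_sum (path_eigvec n) n h"
    using picone_sum_coercive[of n] by auto
  define W where "W = (real n + 1) / (4 * (cos (path_angle n / 2))\<^sup>2)"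
  have W: "W > 0" using path_angle_half_trig(3)[of n] n by (simp add: W_def)
  define \<delta> where "\<delta> = (1 - tan_ratio n) / (K + W)"
  have \<delta>: "\<delta> > 0" using K W tan_ratio_less_1[OF n(1)] by (simp add: \<delta>_def)
  have "(path_eigval n + \<delta>) * fan_norm N h \<le> path_form N h" for h
  proof -
    \<comment> \<open>pad h by a zero to a vector on the even path with n vertices\<close>
    define g where "g = h(n := 0)"
    have "fan_norm n g \<le> (K + W) * picone_sum (path_eigvec n) n g"
      using K(2)[of g] alt_sum_sq_le_picone_sum[of n g] n
      by (simp add: g_def fan_norm_def W_def algebra_simps)
    then have "\<delta> * fan_norm n g \<le> \<delta> * ((K + W) * picone_sum (path_eigvec n) n g)"
      using \<delta> by (intro mult_left_mono) auto
    also have "\<dots> = (1 - tan_ratio n) * picone_sum (path_eigvec n) n g"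
      using K W by (simp add: \<delta>_def)
    finally have "\<delta> * fan_norm n g \<le> (1 - tan_ratio n) * picone_sum (path_eigvec n) n g" .
    then show ?thesis
      using path_form_ge_eigval_fan_norm[of n g] n
      by (simp add: g_def n_def path_form_fun_upd_Suc fan_norm_fun_upd_Suc algebra_simps)
  qed
  then show ?thesis using that \<delta> by (simp add: n_def)
qed

lemma QEC_fan_odd_upper:
  assumes "N \<ge> 3" "odd N"
  shows "QEC_fan N < - path_eigval (Suc N)"
proof -
  obtain \<delta> where "\<delta> > 0" "\<And>h. (path_eigval (Suc N) + \<delta>) * fan_norm N h \<le> path_form N h"
    using path_form_ge_fan_norm_odd[OF assms] by blast
  then show ?thesis using QEC_fan_le[of N "path_eigval (Suc N) + \<delta>"] assms(1) by simp
qed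

lemma QEC_fan_odd_lower:
  assumes "odd N"
  shows "- path_eigval N < QEC_fan N"
proof -
  have N1: "N \<ge> 1" using assms by presburger
  define S where "S = (\<Sum>i=1..N. (path_eigvec N i)\<^sup>2)"
  have S: "S > 0" unfolding S_def by (rule path_eigvec_sumsq_pos[OF N1])
  \<comment> \<open>the odd alternating sum of the eigenvector is nonzero, so the bound is not attained\<close>
  have B: "(alt_eigvec_sum N N)\<^sup>2 > 0"
    using alt_eigvec_sum_odd[OF N1 assms] path_angle_half_trig[OF N1] by (simp add: tan_def)
  have form: "path_form N (path_eigvec N) = path_eigval N * S"
    using path_form_eigval_picone[OF N1, of "path_eigvec N"] by (simp add: S_def picone_sum_self)
  have norm: "fan_norm N (path_eigvec N) = S + (alt_eigvec_sum N N)\<^sup>2"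
    by (simp add: fan_norm_def S_def alt_eigvec_sum_def)
  have pos: "fan_norm N (path_eigvec N) > 0"
    unfolding norm using S B by linarith
  have "path_eigval N * S < path_eigval N * (S + (alt_eigvec_sum N N)\<^sup>2)"
    using path_eigval_pos[OF N1] B by simp
  then have "- path_eigval N < - path_form N (path_eigvec N) / fan_norm N (path_eigvec N)"
    using pos unfolding form norm by (simp add: pos_divide_less_eq)
  also have "\<dots> \<le> QEC_fan N"
    using pos by (rule QEC_fan_ge)
  finally show ?thesis .
qed

lemma QEC_fan_3: "QEC_fan 3 = - 1/2"
proof (rule antisym)
  have sum3: "(\<Sum>i=1..3. g i) = g 1 + g 2 + g 3" "(\<Sum>i\<in>{1..<3}. g i) = g 1 + g 2"
    for g :: "nat \<Rightarrow> real"
    by (simp_all add: numeral_3_eq_3 numeral_2_eq_2)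
  have alt: "alt_sign 1 = 1" "alt_sign 2 = -1" "alt_sign 3 = 1" by (simp_all add: alt_sign_def)
  have Suc_num: "Suc 1 = 2" "Suc 2 = 3" by simp_all
  have "1/2 * fan_norm 3 h \<le> path_form 3 h" for h
  proof -
    have "2 * path_form 3 h - fan_norm 3 h = (h 1 - h 2)\<^sup>2 + (h 2 - h 3)\<^sup>2 + (h 1 - h 3)\<^sup>2"
      unfolding path_form_def fan_norm_def sum3 alt Suc_num by algebra
    moreover have "(h 1 - h 2)\<^sup>2 + (h 2 - h 3)\<^sup>2 + (h 1 - h 3)\<^sup>2 \<ge> 0" by simp
    ultimately show ?thesis by linarith
  qed
  then show "QEC_fan 3 \<le> - 1/2" using QEC_fan_le[of 3 "1/2"] by simp
  have "path_form 3 (\<lambda>_. 1) = 2" "fan_norm 3 (\<lambda>_. 1) = 4"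
    unfolding path_form_def fan_norm_def sum3 alt by simp_all
  then show "- 1/2 \<le> QEC_fan 3" using QEC_fan_ge[of 3 "\<lambda>_. 1"] by simp
qed

lemma path_eigval_formula: "path_eigval N = 4 * (sin (pi / (2 * (real N + 1))))\<^sup>2"
proof -
  have "path_angle N / 2 = pi / (2 * (real N + 1))" by (simp add: path_angle_def)
  then show ?thesis by (simp only: path_eigval_eq)
qed

lemma path_eigval_Suc_less:
  assumes "N \<ge> 1"
  shows "path_eigval (Suc N) < path_eigval N"
proof -
  have "path_angle (Suc N) / 2 < path_angle N / 2"
    by (simp add: path_angle_def frac_less2)
  then have "sin (path_angle (Suc N) / 2) < sin (path_angle N / 2)"
    using path_angle_le[OF assms] path_angle_pos[of "Suc N"]
    by (intro sin_monotone_2pi) auto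
  then show ?thesis
    unfolding path_eigval_eq using path_angle_half_trig(2)[of "Suc N"]
    by (simp add: power_strict_mono)
qed

lemma path_eigval_tendsto_0: "path_eigval \<longlonglongrightarrow> 0"
proof -
  have angle: "path_angle = (\<lambda>n. pi * inverse (real (Suc n)))"
    by (auto simp: path_angle_def divide_inverse add.commute)
  have "path_angle \<longlonglongrightarrow> pi * 0"
    unfolding angle by (intro tendsto_mult tendsto_const LIMSEQ_inverse_real_of_nat)
  then have "(\<lambda>n. 2 - 2 * cos (path_angle n)) \<longlonglongrightarrow> 2 - 2 * cos (pi * 0)"
    by (intro tendsto_intros)
  then show ?thesis by (simp add: path_eigval_def[abs_def])
qed

lemma QEC_fan_Suc_greater:
  assumes "n \<ge> 3"
  shows "QEC_fan n < QEC_fan (Suc n)"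
proof (cases "even n")
  case True
  then have "QEC_fan n = - path_eigval n" using assms by (intro QEC_fan_even) auto
  also have "\<dots> < - path_eigval (Suc n)" using path_eigval_Suc_less[of n] assms by simp
  also have "\<dots> < QEC_fan (Suc n)" using True by (intro QEC_fan_odd_lower) simp
  finally show ?thesis .
next
  case False
  then have "QEC_fan n < - path_eigval (Suc n)" using assms by (intro QEC_fan_odd_upper)
  also have "\<dots> = QEC_fan (Suc n)" using False assms by (intro QEC_fan_even[symmetric]) auto
  finally show ?thesis .
qed

lemma QEC_fan_tendsto_0: "QEC_fan \<longlonglongrightarrow> 0"
proof (rule tendsto_sandwich)
  show "\<forall>\<^sub>F n in sequentially. - path_eigval n \<le> QEC_fan n"
  proof (intro eventually_sequentiallyI[of 2])
    fix n :: nat assume "n \<ge> 2"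
    then show "- path_eigval n \<le> QEC_fan n"
      using QEC_fan_even[of n] QEC_fan_odd_lower[of n] by (cases "even n") auto
  qed
  show "\<forall>\<^sub>F n in sequentially. QEC_fan n \<le> 0"
  proof (intro eventually_sequentiallyI[of 3])
    fix n :: nat assume "n \<ge> 3"
    then show "QEC_fan n \<le> 0"
      using QEC_fan_even[of n] QEC_fan_odd_upper[of n] path_eigval_pos[of n] path_eigval_pos[of "Suc n"]
      by (cases "even n") auto
  qed
  show "(\<lambda>n. - path_eigval n) \<longlonglongrightarrow> 0"
    using tendsto_minus[OF path_eigval_tendsto_0] by simp
qed simp

theorem mainTheorem10:
  shows "(\<forall>n::nat. n \<ge> 1 \<longrightarrow>
            QEC_fan (2*n) = - 4 * (sin (pi / (2 * (2 * real n + 1))))\<^sup>2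
          \<and> - 4 * (sin (pi / (2 * (2 * real n + 2))))\<^sup>2 < QEC_fan (2*n+1)
          \<and> QEC_fan (2*n+1) < - 4 * (sin (pi / (2 * (2 * real n + 3))))\<^sup>2)
       \<and> QEC_fan 3 = - 1/2
       \<and> (\<forall>n::nat. n \<ge> 3 \<longrightarrow> QEC_fan n < QEC_fan (Suc n))
       \<and> (QEC_fan \<longlonglongrightarrow> 0)"
proof (intro conjI allI impI)
  fix n :: nat assume n: "n \<ge> 1"
  show "QEC_fan (2*n) = - 4 * (sin (pi / (2 * (2 * real n + 1))))\<^sup>2"
    using QEC_fan_even[of "2*n"] n by (simp add: path_eigval_formula)
  show "- 4 * (sin (pi / (2 * (2 * real n + 2))))\<^sup>2 < QEC_fan (2*n+1)"
    using QEC_fan_odd_lower[of "2*n+1"] by (simp add: path_eigval_formula algebra_simps)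
  show "QEC_fan (2*n+1) < - 4 * (sin (pi / (2 * (2 * real n + 3))))\<^sup>2"
    using QEC_fan_odd_upper[of "2*n+1"] n by (simp add: path_eigval_formula algebra_simps)
qed (use QEC_fan_3 QEC_fan_Suc_greater QEC_fan_tendsto_0 in auto)

end
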